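(* Let $r,n,\delta\ge 2$ be natural numbers, let $m := \max\{\binom{rn-1}{r-1}n^2, \delta\}$ and $N := \binom{m-1}{n-1}$. Let $G$ be the graph with vertices $v_{i,j,k}$ for $i\in[n]$, $j\in[N]$, $k\in[m]$, and vertices $s_{i,X}$ for $i\in[n]$ and $X\subseteq[m]$ with $|X|=n$, whose edges are: $v_{i,j,k}v_{i',j',k'}$ whenever $i\neq i'$ and $k=k'$; and $s_{i,X}v_{i,j,k}$ whenever $k\in X$ (for all $j\in[N]$). Then $\gamma(G)=n$.
   Context: $[t]=\{1,\dots,t\}$. There are no other edges in $G$ than those listed. A set $D\subseteq V(G)$ is a total dominating set of $G$ if every vertex of $V(G)$ is adjacent to some vertex of $D$. $\gamma(G):=\min\{\chi(G[D]) : D \text{ a total dominating set of } G\}$, where $\chi$ is the chromatic number and $G[D]$ the induced subgraph. *)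

theory Defs
  imports Main
begin

text \<open>Generic graph notions for a graph given by a vertex set Vs and an adjacency
  predicate E (assumed symmetric and irreflexive on Vs).\<close>

definition total_dominating :: "'a set \<Rightarrow> ('a \<Rightarrow> 'a \<Rightarrow> bool) \<Rightarrow> 'a set \<Rightarrow> bool" where
  "total_dominating Vs E D \<longleftrightarrow> D \<subseteq> Vs \<and> (\<forall>v\<in>Vs. \<exists>d\<in>D. E v d)"

definition chromatic_number :: "'a set \<Rightarrow> ('a \<Rightarrow> 'a \<Rightarrow> bool) \<Rightarrow> nat" where
  "chromatic_number D E = (LEAST k. \<exists>c :: 'a \<Rightarrow> nat.
      (\<forall>v\<in>D. c v < k) \<and> (\<forall>u\<in>D. \<forall>v\<in>D. E u v \<longrightarrow> c u \<noteq> c v))"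

definition gamma_td :: "'a set \<Rightarrow> ('a \<Rightarrow> 'a \<Rightarrow> bool) \<Rightarrow> nat" where
  "gamma_td Vs E = Inf {chromatic_number D E | D. total_dominating Vs E D}"

datatype vtx = V nat nat nat | S nat "nat set"

definition lm_m :: "nat \<Rightarrow> nat \<Rightarrow> nat \<Rightarrow> nat" where
  "lm_m r n \<delta> = max (((r*n - 1) choose (r - 1)) * n^2) \<delta>"

definition lm_N :: "nat \<Rightarrow> nat \<Rightarrow> nat \<Rightarrow> nat" where
  "lm_N r n \<delta> = (lm_m r n \<delta> - 1) choose (n - 1)"

definition lm_verts :: "nat \<Rightarrow> nat \<Rightarrow> nat \<Rightarrow> vtx set" where
  "lm_verts r n \<delta> =
     {V i j k | i j k. i \<in> {1..n} \<and> j \<in> {1..lm_N r n \<delta>} \<and> k \<in> {1..lm_m r n \<delta>}}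
   \<union> {S i X | i X. i \<in> {1..n} \<and> X \<subseteq> {1..lm_m r n \<delta>} \<and> card X = n}"

fun lm_adj0 :: "vtx \<Rightarrow> vtx \<Rightarrow> bool" where
  "lm_adj0 (V i j k) (V i' j' k') = (i \<noteq> i' \<and> k = k')"
| "lm_adj0 (S i X) (V i' j k) = (i = i' \<and> k \<in> X)"
| "lm_adj0 _ _ = False"

definition lm_adj :: "nat \<Rightarrow> nat \<Rightarrow> nat \<Rightarrow> vtx \<Rightarrow> vtx \<Rightarrow> bool" where
  "lm_adj r n \<delta> u v \<longleftrightarrow> u \<in> lm_verts r n \<delta> \<and> v \<in> lm_verts r n \<delta> \<and>
     (lm_adj0 u v \<or> lm_adj0 v u)"

end

theory Submission
  imports Defs
begin

text \<open>A total dominating set D must dominate every S i X, so for each i fewer than n columns k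
  contain no vertex V i j k of D. Since m \<ge> n^2 > n (n - 1), some column k meets D in every
  row i; the chosen vertices V i j_i k (i = 1..n) form an n-clique, so \<chi>(G[D]) \<ge> n.
  Conversely the layer j = 1 is total dominating and is properly coloured by the row index i.\<close>

lemma chromatic_number_le:
  assumes "\<forall>v\<in>D. c v < k" and "\<forall>u\<in>D. \<forall>v\<in>D. E u v \<longrightarrow> c u \<noteq> c v"
  shows "chromatic_number D E \<le> k"
  unfolding chromatic_number_def using assms by (intro Least_le) blast

lemma chromatic_number_colouring:
  assumes "finite D" and "\<forall>v\<in>D. \<not> E v v"
  obtains c :: "'a \<Rightarrow> nat"
  where "\<forall>v\<in>D. c v < chromatic_number D E" and "\<forall>u\<in>D. \<forall>v\<in>D. E u v \<longrightarrow> c u \<noteq> c v"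
proof -
  let ?P = "\<lambda>k. \<exists>c :: 'a \<Rightarrow> nat. (\<forall>v\<in>D. c v < k) \<and> (\<forall>u\<in>D. \<forall>v\<in>D. E u v \<longrightarrow> c u \<noteq> c v)"
  obtain f :: "'a \<Rightarrow> nat" and K where f: "f ` D = {i. i < K}" "inj_on f D"
    using finite_imp_inj_to_nat_seg[OF assms(1)] by blast
  have "?P K"
  proof (intro exI[of _ f] conjI ballI impI)
    show "f v < K" if "v \<in> D" for v using f(1) that by auto
    show "f u \<noteq> f v" if "u \<in> D" "v \<in> D" "E u v" for u v
      using that assms(2) f(2) by (metis inj_on_eq_iff)
  qed
  then have "?P (LEAST k. ?P k)" by (rule LeastI)
  then show thesis using that unfolding chromatic_number_def by blast
qed

lemma card_clique_le_chromatic_number: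
  assumes "finite D" and "\<forall>v\<in>D. \<not> E v v"
    and "Q \<subseteq> D" and "\<forall>u\<in>Q. \<forall>v\<in>Q. u \<noteq> v \<longrightarrow> E u v"
  shows "card Q \<le> chromatic_number D E"
proof -
  obtain c :: "'a \<Rightarrow> nat" where c: "\<forall>v\<in>D. c v < chromatic_number D E"
    "\<forall>u\<in>D. \<forall>v\<in>D. E u v \<longrightarrow> c u \<noteq> c v"
    using chromatic_number_colouring[of D E] assms(1,2) by blast
  have "inj_on c Q"
  proof (rule inj_onI, rule ccontr)
    fix u v assume "u \<in> Q" "v \<in> Q" "c u = c v" "u \<noteq> v"
    then show False using assms(3,4) c(2) by blast
  qed
  moreover have "c ` Q \<subseteq> {..<chromatic_number D E}" using assms(3) c(1) by blast
  ultimately have "card Q \<le> card {..<chromatic_number D E}"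
    by (intro card_inj_on_le) simp_all
  then show ?thesis by simp
qed

lemma gamma_td_eqI:
  assumes "total_dominating Vs E D\<^sub>0" and "chromatic_number D\<^sub>0 E \<le> k"
    and "\<And>D. total_dominating Vs E D \<Longrightarrow> k \<le> chromatic_number D E"
  shows "gamma_td Vs E = k"
  unfolding gamma_td_def
proof (rule cInf_eq_minimum)
  have "chromatic_number D\<^sub>0 E = k" using assms by (simp add: le_antisym)
  then show "k \<in> {chromatic_number D E | D. total_dominating Vs E D}"
    using assms(1) by blast
qed (use assms(3) in blast)

lemma n_squared_le_lm_m: "n * n \<le> lm_m r n \<delta>"
proof (cases "n = 0")
  case False
  then have "r - 1 \<le> r * n - 1" by (intro diff_le_mono) simp
  then have "0 < (r * n - 1) choose (r - 1)" by (rule zero_less_binomial)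
  then have "1 * (n * n) \<le> ((r * n - 1) choose (r - 1)) * (n * n)"
    by (intro mult_le_mono1) linarith
  then show ?thesis unfolding lm_m_def power2_eq_square by (simp add: le_max_iff_disj)
qed simp

lemma lm_N_pos:
  assumes "n \<ge> 1"
  shows "1 \<le> lm_N r n \<delta>"
proof -
  have "n \<le> lm_m r n \<delta>" using le_square[of n] n_squared_le_lm_m[of n r \<delta>] by linarith
  then have "0 < lm_N r n \<delta>" unfolding lm_N_def by (intro zero_less_binomial diff_le_mono)
  then show ?thesis by simp
qed

lemma finite_lm_verts: "finite (lm_verts r n \<delta>)"
proof -
  let ?m = "lm_m r n \<delta>" and ?N = "lm_N r n \<delta>"
  have "lm_verts r n \<delta> \<subseteq> (\<Union>i\<in>{1..n}. \<Union>j\<in>{1..?N}. \<Union>k\<in>{1..?m}. {V i j k})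
      \<union> (\<Union>i\<in>{1..n}. \<Union>X\<in>Pow {1..?m}. {S i X})"
    unfolding lm_verts_def by auto
  then show ?thesis by (rule finite_subset) simp
qed

lemma lm_adj_irrefl: "\<not> lm_adj r n \<delta> v v"
  unfolding lm_adj_def by (cases v) auto

lemma lm_adj_V_V:
  assumes "V i j k \<in> lm_verts r n \<delta>" and "V i' j' k \<in> lm_verts r n \<delta>" and "i \<noteq> i'"
  shows "lm_adj r n \<delta> (V i j k) (V i' j' k)"
  using assms unfolding lm_adj_def by simp

lemma total_dominating_misses_few_columns:
  assumes "total_dominating (lm_verts r n \<delta>) (lm_adj r n \<delta>) D" and "i \<in> {1..n}"
  shows "card ({1..lm_m r n \<delta>} - {k. \<exists>j. V i j k \<in> D}) < n"
proof (rule ccontr)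
  let ?X0 = "{1..lm_m r n \<delta>} - {k. \<exists>j. V i j k \<in> D}"
  assume "\<not> card ?X0 < n"
  then obtain X where X: "X \<subseteq> ?X0" "card X = n"
    by (meson obtain_subset_with_card_n not_less)
  then have "S i X \<in> lm_verts r n \<delta>" using assms(2) unfolding lm_verts_def by blast
  then obtain d where d: "d \<in> D" "lm_adj r n \<delta> (S i X) d"
    using assms(1) unfolding total_dominating_def by blast
  then obtain j k where "d = V i j k" "k \<in> X"
    unfolding lm_adj_def by (cases d) auto
  then have "k \<in> {k. \<exists>j. V i j k \<in> D}" using d(1) by blast
  then show False using X(1) \<open>k \<in> X\<close> by blast
qed

lemma total_dominating_common_column:
  assumes "total_dominating (lm_verts r n \<delta>) (lm_adj r n \<delta>) D" and "n \<ge> 1"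
  obtains k where "\<forall>i\<in>{1..n}. \<exists>j. V i j k \<in> D"
proof -
  let ?m = "lm_m r n \<delta>"
  let ?U = "\<Union>i\<in>{1..n}. {1..?m} - {k. \<exists>j. V i j k \<in> D}"
  have "card ?U \<le> (\<Sum>i\<in>{1..n}. card ({1..?m} - {k. \<exists>j. V i j k \<in> D}))"
    by (rule card_UN_le) simp
  also have "\<dots> \<le> (\<Sum>i\<in>{1..n}. n - 1)"
    using total_dominating_misses_few_columns[OF assms(1)] by (intro sum_mono) fastforce
  also have "\<dots> < n * n" using assms(2) by simp
  also have "\<dots> \<le> card {1..?m}" using n_squared_le_lm_m by simp
  finally have "\<not> {1..?m} \<subseteq> ?U" using card_mono[of ?U "{1..?m}"] by auto
  then show thesis using that by blast
qed

lemma total_dominating_chromatic_number_ge: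
  assumes "total_dominating (lm_verts r n \<delta>) (lm_adj r n \<delta>) D" and "n \<ge> 1"
  shows "n \<le> chromatic_number D (lm_adj r n \<delta>)"
proof -
  have DV: "D \<subseteq> lm_verts r n \<delta>" using assms(1) unfolding total_dominating_def by blast
  obtain k where "\<forall>i\<in>{1..n}. \<exists>j. V i j k \<in> D"
    using total_dominating_common_column[OF assms] by blast
  then obtain j where j: "\<And>i. i \<in> {1..n} \<Longrightarrow> V i (j i) k \<in> D" by metis
  let ?Q = "(\<lambda>i. V i (j i) k) ` {1..n}"
  have "card ?Q = n" by (subst card_image) (auto intro: inj_onI)
  moreover have "card ?Q \<le> chromatic_number D (lm_adj r n \<delta>)"
  proof (rule card_clique_le_chromatic_number)
    show "finite D" using DV finite_lm_verts by (rule finite_subset)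
    show "\<forall>v\<in>D. \<not> lm_adj r n \<delta> v v" using lm_adj_irrefl by blast
    show "?Q \<subseteq> D" using j by blast
    show "\<forall>u\<in>?Q. \<forall>v\<in>?Q. u \<noteq> v \<longrightarrow> lm_adj r n \<delta> u v"
      using j DV by (auto intro!: lm_adj_V_V)
  qed
  ultimately show ?thesis by simp
qed

lemma lm_layer_total_dominating:
  assumes "n \<ge> 2"
  shows "total_dominating (lm_verts r n \<delta>) (lm_adj r n \<delta>)
           {V i 1 k | i k. i \<in> {1..n} \<and> k \<in> {1..lm_m r n \<delta>}}"
    (is "total_dominating ?Vs ?E ?D")
proof -
  have sub: "?D \<subseteq> ?Vs" unfolding lm_verts_def using lm_N_pos[of n r \<delta>] assms by auto
  have "\<exists>d\<in>?D. ?E v d" if v: "v \<in> ?Vs" for v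
  proof (cases v)
    case (V i j k)
    then have ik: "i \<in> {1..n}" "k \<in> {1..lm_m r n \<delta>}" using v unfolding lm_verts_def by auto
    define i' :: nat where "i' = (if i = 1 then 2 else 1)"
    have "V i' 1 k \<in> ?D" using ik assms unfolding i'_def by auto
    moreover have "i \<noteq> i'" unfolding i'_def by simp
    ultimately have "?E v (V i' 1 k)" using v sub unfolding V by (intro lm_adj_V_V) auto
    then show ?thesis using \<open>V i' 1 k \<in> ?D\<close> by blast
  next
    case (S i X)
    then have iX: "i \<in> {1..n}" "X \<subseteq> {1..lm_m r n \<delta>}" "card X = n"
      using v unfolding lm_verts_def by auto
    then have "X \<noteq> {}" using assms by auto
    then obtain k where k: "k \<in> X" by blast
    then have "V i 1 k \<in> ?D" using iX by auto
    moreover have "?E v (V i 1 k)" using calculation sub v k unfolding S lm_adj_def by auto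
    ultimately show ?thesis by blast
  qed
  then show ?thesis unfolding total_dominating_def using sub by blast
qed

lemma lm_layer_chromatic_number_le:
  "chromatic_number {V i 1 k | i k. i \<in> {1..n} \<and> k \<in> {1..lm_m r n \<delta>}} (lm_adj r n \<delta>) \<le> n"
    (is "chromatic_number ?D ?E \<le> n")
proof (rule chromatic_number_le)
  let ?c = "\<lambda>v. case v of V i j k \<Rightarrow> i - 1 | S i X \<Rightarrow> 0"
  show "\<forall>v\<in>?D. ?c v < n" by auto
  have "?c u \<noteq> ?c v" if uv_in: "u \<in> ?D" "v \<in> ?D" and adj: "?E u v" for u v
  proof -
    obtain i k i' k' where uv: "u = V i 1 k" "v = V i' 1 k'" "i \<ge> 1" "i' \<ge> 1"
      using uv_in by auto
    moreover have "i \<noteq> i'" using adj unfolding uv lm_adj_def by auto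
    ultimately show ?thesis by simp
  qed
  then show "\<forall>u\<in>?D. \<forall>v\<in>?D. ?E u v \<longrightarrow> ?c u \<noteq> ?c v" by blast
qed

theorem lemma2p4:
  fixes r n \<delta> :: nat
  assumes "r \<ge> 2" and "n \<ge> 2" and "\<delta> \<ge> 2"
  shows "gamma_td (lm_verts r n \<delta>) (lm_adj r n \<delta>) = n"
proof (rule gamma_td_eqI)
  show "total_dominating (lm_verts r n \<delta>) (lm_adj r n \<delta>)
          {V i 1 k | i k. i \<in> {1..n} \<and> k \<in> {1..lm_m r n \<delta>}}"
    using assms(2) by (rule lm_layer_total_dominating)
  show "chromatic_number {V i 1 k | i k. i \<in> {1..n} \<and> k \<in> {1..lm_m r n \<delta>}}
          (lm_adj r n \<delta>) \<le> n"
    by (rule lm_layer_chromatic_number_le)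
  show "n \<le> chromatic_number D (lm_adj r n \<delta>)"
    if "total_dominating (lm_verts r n \<delta>) (lm_adj r n \<delta>) D" for D
    using that assms(2) by (intro total_dominating_chromatic_number_ge) simp_all
qed

end
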